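(* Let $\Pi'\subseteq\Pi$ be nonempty and let $t\ge1$. Then there exists a distribution $P$ over $\Pi'$ such that for all $\pi\in\Pi'$, \[\mathbb{E}_{x\sim D_X}\Bigl[\frac{1}{(1-K\mu_t)W_{P}(x,\pi(x))+\mu_t}\Bigr]\le 2K.\]
   Context: $A$ is a set of $K$ actions, $X$ a set of contexts, $\Pi$ a finite set of $N$ policies $\pi:X\to A$, $D_X$ a distribution on $X$, $\delta\in(0,1)$. $\delta_t=\delta/(4Nt^2)$ and $\mu_t=\min\{\frac1{2K},\sqrt{\ln(1/\delta_t)/(2Kt)}\}$. For a distribution $P$ over $\Pi'$, $W_P(x,a)=\sum_{\pi\in\Pi':\pi(x)=a}P(\pi)$. (This is the feasibility of the distribution-selection step of the PolicyElimination algorithm, where $\Pi'$ is the current nonempty set $\Pi_{t-1}$ of surviving policies.) *)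

theory Defs
  imports "HOL-Probability.Probability"
begin

definition delta_t :: "real \<Rightarrow> nat \<Rightarrow> nat \<Rightarrow> real" where
  "delta_t \<delta> N t = \<delta> / (4 * real N * (real t)^2)"

definition mu_t :: "real \<Rightarrow> nat \<Rightarrow> nat \<Rightarrow> nat \<Rightarrow> real" where
  "mu_t \<delta> K N t = min (1 / (2 * real K))
      (sqrt (ln (1 / delta_t \<delta> N t) / (2 * real K * real t)))"

definition is_distr :: "('x \<Rightarrow> 'a) set \<Rightarrow> (('x \<Rightarrow> 'a) \<Rightarrow> real) \<Rightarrow> bool" where
  "is_distr Pol' P \<longleftrightarrow> (\<forall>\<pi>. P \<pi> \<ge> 0) \<and> (\<forall>\<pi>. \<pi> \<notin> Pol' \<longrightarrow> P \<pi> = 0)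
     \<and> (\<Sum>\<pi>\<in>Pol'. P \<pi>) = 1"

definition W :: "('x \<Rightarrow> 'a) set \<Rightarrow> (('x \<Rightarrow> 'a) \<Rightarrow> real) \<Rightarrow> 'x \<Rightarrow> 'a \<Rightarrow> real" where
  "W Pol' P x a = (\<Sum>\<pi>\<in>{\<pi>\<in>Pol'. \<pi> x = a}. P \<pi>)"

end

theory Submission
  imports Defs
begin

text \<open>Write \<open>c = 1 - K \<mu>\<^sub>t\<close> and maximise the concave potential
  \<open>\<Phi>(P) = E\<^sub>x \<Sum>\<^sub>a ln (c W\<^sub>P(x,a) + \<mu>\<^sub>t)\<close> over the simplex of distributions on \<open>\<Pi>'\<close>.
  Shifting mass \<open>e\<close> from the maximiser \<open>P\<close> to the point mass at \<open>\<pi>\<close> and letting \<open>e \<rightarrow> 0\<close>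
  gives the first-order condition
  \<open>E\<^sub>x 1 / (c W\<^sub>P(x,\<pi>(x)) + \<mu>\<^sub>t) \<le> E\<^sub>x \<Sum>\<^sub>a W\<^sub>P(x,a) / (c W\<^sub>P(x,a) + \<mu>\<^sub>t)\<close>, and every summand
  on the right is at most \<open>1 / (c + \<mu>\<^sub>t) \<le> 2\<close>.
  Since \<open>W\<^sub>P(x,-)\<close> depends on \<open>x\<close> only through the finitely many actions \<open>\<pi>(x)\<close>,
  \<open>\<pi> \<in> \<Pi>'\<close>, the expectation is a finite weighted sum over representative contexts;
  this makes \<open>\<Phi>\<close> continuous, so the maximiser exists.\<close>

lemma ln_diff_ge_div:
  fixes x y :: real
  assumes "0 < x" "0 < y"
  shows "(y - x) / y \<le> ln y - ln x"
proof -
  have "ln (x / y) \<le> x / y - 1" using assms by (intro ln_le_minus_one) simp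
  then show ?thesis using assms by (simp add: ln_div diff_divide_distrib)
qed

lemma is_distr_le_one:
  assumes "finite Pol'" "is_distr Pol' P"
  shows "P \<pi> \<le> 1"
proof (cases "\<pi> \<in> Pol'")
  case True
  then have "P \<pi> \<le> (\<Sum>\<pi>\<in>Pol'. P \<pi>)"
    using assms by (intro member_le_sum) (auto simp: is_distr_def)
  then show ?thesis using assms by (simp add: is_distr_def)
qed (use assms in \<open>simp add: is_distr_def\<close>)

lemma W_nonneg: "is_distr Pol' P \<Longrightarrow> 0 \<le> W Pol' P x a"
  unfolding W_def is_distr_def by (simp add: sum_nonneg)

lemma W_le_one:
  assumes "finite Pol'" "is_distr Pol' P"
  shows "W Pol' P x a \<le> 1"
proof -
  have "W Pol' P x a \<le> (\<Sum>\<pi>\<in>Pol'. P \<pi>)"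
    unfolding W_def using assms by (intro sum_mono2) (auto simp: is_distr_def)
  then show ?thesis using assms by (simp add: is_distr_def)
qed

lemma W_mult_add_pos:
  assumes "is_distr Pol' P" "0 \<le> c" "0 < \<mu>"
  shows "0 < c * W Pol' P x a + \<mu>"
  using W_nonneg[OF assms(1)] assms(2,3) by (simp add: add_nonneg_pos)

lemma W_cong: "\<forall>\<pi>\<in>Pol'. \<pi> x = \<pi> y \<Longrightarrow> W Pol' P x a = W Pol' P y a"
  unfolding W_def by (metis (mono_tags, lifting) mem_Collect_eq)

lemma is_distr_uniform:
  assumes "finite Pol'" "Pol' \<noteq> {}"
  shows "is_distr Pol' (\<lambda>\<pi>. of_bool (\<pi> \<in> Pol') / real (card Pol'))"
  using assms by (simp add: is_distr_def card_gt_0_iff)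

lemma is_distr_mix_point:
  assumes "finite Pol'" "is_distr Pol' P" "\<pi>\<^sub>0 \<in> Pol'" "0 \<le> e" "e \<le> 1"
  shows "is_distr Pol' (\<lambda>\<pi>. (1 - e) * P \<pi> + e * of_bool (\<pi> = \<pi>\<^sub>0))"
  using assms by (auto simp: is_distr_def sum.distrib sum_distrib_left[symmetric])

lemma W_mix_point:
  assumes "finite Pol'" "\<pi>\<^sub>0 \<in> Pol'"
  shows "W Pol' (\<lambda>\<pi>. (1 - e) * P \<pi> + e * of_bool (\<pi> = \<pi>\<^sub>0)) x a
           = (1 - e) * W Pol' P x a + e * of_bool (\<pi>\<^sub>0 x = a)"
  using assms by (simp add: W_def sum.distrib sum_distrib_left[symmetric] of_bool_def sum.If_cases)

lemma compact_is_distr: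
  fixes Pol' :: "('x \<Rightarrow> 'a) set"
  assumes "finite Pol'"
  shows "compact {P. is_distr Pol' P}"
proof -
  define S where "S \<pi> = (if \<pi> \<in> Pol' then {0..1} else {0::real})" for \<pi>
  have "compactin (product_topology (\<lambda>_. euclideanreal) UNIV) (PiE UNIV S)"
    by (subst compactin_PiE) (auto simp: S_def)
  then have "compact (PiE UNIV S)"
    by (simp add: euclidean_product_topology)
  moreover have "closed {P::('x \<Rightarrow> 'a) \<Rightarrow> real. (\<Sum>\<pi>\<in>Pol'. P \<pi>) = 1}"
    by (intro closed_Collect_eq continuous_intros continuous_on_product_coordinates)
  moreover have "{P. is_distr Pol' P} = PiE UNIV S \<inter> {P. (\<Sum>\<pi>\<in>Pol'. P \<pi>) = 1}"
    using is_distr_le_one[OF assms] by (auto simp: is_distr_def S_def PiE_iff split: if_splits; metis order_refl)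
  ultimately show ?thesis by (simp add: compact_Int_closed)
qed

lemma is_distr_attains_max:
  fixes f :: "(('x \<Rightarrow> 'a) \<Rightarrow> real) \<Rightarrow> real"
  assumes "finite Pol'" "Pol' \<noteq> {}" "continuous_on {P. is_distr Pol' P} f"
  shows "\<exists>P. is_distr Pol' P \<and> (\<forall>P'. is_distr Pol' P' \<longrightarrow> f P' \<le> f P)"
proof -
  have "{P. is_distr Pol' P} \<noteq> {}"
    using is_distr_uniform[OF assms(1,2)] by blast
  then show ?thesis
    using continuous_attains_sup[OF compact_is_distr[OF assms(1)] _ assms(3)] by blast
qed

lemma log_barrier_first_order:
  fixes P :: "('x \<Rightarrow> 'a) \<Rightarrow> real"
  assumes "finite Pol'" "\<forall>x\<in>Q. 0 \<le> q x" "0 < c" "0 < \<mu>" "is_distr Pol' P" "\<pi>\<^sub>0 \<in> Pol'"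
    and max: "\<And>P'. is_distr Pol' P' \<Longrightarrow>
      (\<Sum>x\<in>Q. q x * (\<Sum>a\<in>A. ln (c * W Pol' P' x a + \<mu>)))
        \<le> (\<Sum>x\<in>Q. q x * (\<Sum>a\<in>A. ln (c * W Pol' P x a + \<mu>)))"
  shows "(\<Sum>x\<in>Q. q x * (\<Sum>a\<in>A. (of_bool (\<pi>\<^sub>0 x = a) - W Pol' P x a) / (c * W Pol' P x a + \<mu>))) \<le> 0"
proof -
  define G where "G e = (\<Sum>x\<in>Q. q x * (\<Sum>a\<in>A. (of_bool (\<pi>\<^sub>0 x = a) - W Pol' P x a)
      / (c * ((1 - e) * W Pol' P x a + e * of_bool (\<pi>\<^sub>0 x = a)) + \<mu>)))" for e
  have pos: "0 < c * W Pol' P' x a + \<mu>" if "is_distr Pol' P'" for P' x a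
    using that assms(3,4) by (simp add: W_mult_add_pos)
  have G_le: "G e \<le> 0" if e: "0 < e" "e < 1" for e
  proof -
    define P\<^sub>e where "P\<^sub>e \<pi> = (1 - e) * P \<pi> + e * of_bool (\<pi> = \<pi>\<^sub>0)" for \<pi>
    have distr: "is_distr Pol' P\<^sub>e"
      unfolding P\<^sub>e_def using assms e by (intro is_distr_mix_point) auto
    have W_P\<^sub>e: "W Pol' P\<^sub>e x a = (1 - e) * W Pol' P x a + e * of_bool (\<pi>\<^sub>0 x = a)" for x a
      unfolding P\<^sub>e_def using assms(1,6) by (rule W_mix_point)
    have "c * e * G e = (\<Sum>x\<in>Q. q x * (\<Sum>a\<in>A.
        ((c * W Pol' P\<^sub>e x a + \<mu>) - (c * W Pol' P x a + \<mu>)) / (c * W Pol' P\<^sub>e x a + \<mu>)))"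
      unfolding G_def W_P\<^sub>e by (simp add: sum_distrib_left algebra_simps)
    also have "\<dots> \<le> (\<Sum>x\<in>Q. q x * (\<Sum>a\<in>A. ln (c * W Pol' P\<^sub>e x a + \<mu>) - ln (c * W Pol' P x a + \<mu>)))"
      using assms(2) pos[OF distr] pos[OF assms(5)]
      by (intro sum_mono mult_left_mono ln_diff_ge_div) auto
    also have "\<dots> \<le> 0"
      using max[OF distr] by (simp add: sum_subtractf right_diff_distrib)
    finally show ?thesis
      using assms(3) e by (simp add: mult_le_0_iff)
  qed
  have "eventually (\<lambda>e. G e \<le> 0) (at_right 0)"
    unfolding eventually_at_right_field using G_le by (intro exI[of _ 1]) auto
  moreover have "(G \<longlongrightarrow> G 0) (at_right 0)"
    unfolding G_def using pos[OF assms(5)]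
    by (intro tendsto_intros) (auto, metis less_irrefl)
  ultimately have "G 0 \<le> 0"
    by (intro tendsto_upperbound[of G "G 0"]) auto
  then show ?thesis by (simp add: G_def)
qed

lemma sum_point_mass_minus_div:
  fixes w d :: "'a \<Rightarrow> real"
  assumes "finite A" "b \<in> A"
  shows "(\<Sum>a\<in>A. (of_bool (b = a) - w a) / d a) = 1 / d b - (\<Sum>a\<in>A. w a / d a)"
proof -
  have "(\<Sum>a\<in>A. of_bool (b = a) / d a) = (\<Sum>a\<in>A. if a = b then 1 / d b else 0)"
    by (rule sum.cong) auto
  then show ?thesis
    using assms by (simp add: diff_divide_distrib sum_subtractf)
qed

lemma sum_W_div_le:
  assumes "finite Pol'" "is_distr Pol' P" "\<forall>x\<in>Q. 0 \<le> q x" "(\<Sum>x\<in>Q. q x) = 1" "0 \<le> c" "0 < \<mu>"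
  shows "(\<Sum>x\<in>Q. q x * (\<Sum>a\<in>A. W Pol' P x a / (c * W Pol' P x a + \<mu>))) \<le> real (card A) / (c + \<mu>)"
proof -
  have "(\<Sum>x\<in>Q. q x * (\<Sum>a\<in>A. W Pol' P x a / (c * W Pol' P x a + \<mu>)))
      \<le> (\<Sum>x\<in>Q. q x * (\<Sum>a\<in>A. 1 / (c + \<mu>)))"
  proof (intro sum_mono mult_left_mono)
    fix x a
    have "0 < c * W Pol' P x a + \<mu>"
      using assms(2,5,6) by (rule W_mult_add_pos)
    moreover have "W Pol' P x a * \<mu> \<le> \<mu>"
      using W_le_one[OF assms(1,2)] assms(6) by simp
    ultimately show "W Pol' P x a / (c * W Pol' P x a + \<mu>) \<le> 1 / (c + \<mu>)"
      using assms(5,6) by (simp add: field_simps)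
  qed (use assms(3) in auto)
  also have "\<dots> = real (card A) / (c + \<mu>)"
    unfolding sum_constant sum_distrib_right[symmetric] assms(4) by simp
  finally show ?thesis .
qed

lemma exists_distr_inverse_weight_le:
  fixes Pol' :: "('x \<Rightarrow> 'a) set" and q :: "'x \<Rightarrow> real"
  assumes "finite Pol'" "Pol' \<noteq> {}" "finite A"
    and q_nonneg: "\<forall>x\<in>Q. 0 \<le> q x" and q_sum: "(\<Sum>x\<in>Q. q x) = 1"
    and actions: "\<forall>\<pi>\<in>Pol'. \<forall>x\<in>Q. \<pi> x \<in> A"
    and "0 < c" "0 < \<mu>"
  shows "\<exists>P. is_distr Pol' P \<and>
    (\<forall>\<pi>\<in>Pol'. (\<Sum>x\<in>Q. q x / (c * W Pol' P x (\<pi> x) + \<mu>)) \<le> real (card A) / (c + \<mu>))"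
proof -
  define \<Phi> where "\<Phi> P = (\<Sum>x\<in>Q. q x * (\<Sum>a\<in>A. ln (c * W Pol' P x a + \<mu>)))" for P
  have pos: "0 < c * W Pol' P x a + \<mu>" if "is_distr Pol' P" for P x a
    using that assms(7,8) by (simp add: W_mult_add_pos)
  have "continuous_on {P. is_distr Pol' P} \<Phi>"
    unfolding \<Phi>_def
  proof (intro continuous_intros)
    show "continuous_on {P. is_distr Pol' P} (\<lambda>P. W Pol' P x a)" for x a
      unfolding W_def by (intro continuous_intros continuous_on_subset[OF continuous_on_product_coordinates]) simp
    show "\<forall>P\<in>{P. is_distr Pol' P}. c * W Pol' P x a + \<mu> \<noteq> 0" for x a
      using pos by (metis less_irrefl mem_Collect_eq)
  qed
  then obtain P where P: "is_distr Pol' P" and max: "\<forall>P'. is_distr Pol' P' \<longrightarrow> \<Phi> P' \<le> \<Phi> P"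
    using is_distr_attains_max assms(1,2) by blast
  have "(\<Sum>x\<in>Q. q x / (c * W Pol' P x (\<pi> x) + \<mu>)) \<le> real (card A) / (c + \<mu>)" if "\<pi> \<in> Pol'" for \<pi>
  proof -
    let ?r = "\<lambda>x a. W Pol' P x a / (c * W Pol' P x a + \<mu>)"
    have "(\<Sum>x\<in>Q. q x / (c * W Pol' P x (\<pi> x) + \<mu>)) - (\<Sum>x\<in>Q. q x * (\<Sum>a\<in>A. ?r x a))
        = (\<Sum>x\<in>Q. q x * (1 / (c * W Pol' P x (\<pi> x) + \<mu>) - (\<Sum>a\<in>A. ?r x a)))"
      by (simp add: right_diff_distrib sum_subtractf)
    also have "\<dots> = (\<Sum>x\<in>Q. q x * (\<Sum>a\<in>A. (of_bool (\<pi> x = a) - W Pol' P x a) / (c * W Pol' P x a + \<mu>)))"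
      using actions \<open>\<pi> \<in> Pol'\<close> assms(3)
      by (intro sum.cong refl arg_cong[where f = "(*) _"] sum_point_mass_minus_div[symmetric]) auto
    also have "\<dots> \<le> 0"
      using log_barrier_first_order[OF assms(1) q_nonneg assms(7,8) P \<open>\<pi> \<in> Pol'\<close>] max
      unfolding \<Phi>_def by blast
    finally have "(\<Sum>x\<in>Q. q x / (c * W Pol' P x (\<pi> x) + \<mu>)) \<le> (\<Sum>x\<in>Q. q x * (\<Sum>a\<in>A. ?r x a))"
      by simp
    also have "\<dots> \<le> real (card A) / (c + \<mu>)"
      using sum_W_div_le[OF assms(1) P q_nonneg q_sum] assms(7,8) by simp
    finally show ?thesis .
  qed
  then show ?thesis using P by blast
qed

lemma (in finite_measure) integral_eq_sum_fibers:
  fixes \<kappa> :: "'a \<Rightarrow> 'k" and h :: "'k \<Rightarrow> real"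
  assumes "finite (\<kappa> ` space M)" and fibers: "\<And>k. {x \<in> space M. \<kappa> x = k} \<in> sets M"
  shows "(\<integral>x. h (\<kappa> x) \<partial>M) = (\<Sum>k\<in>\<kappa> ` space M. h k * measure M {x \<in> space M. \<kappa> x = k})"
proof -
  have "(\<integral>x. h (\<kappa> x) \<partial>M) = (\<integral>x. (\<Sum>k\<in>\<kappa> ` space M. h k * indicator {x \<in> space M. \<kappa> x = k} x) \<partial>M)"
  proof (rule Bochner_Integration.integral_cong[OF refl])
    fix x assume "x \<in> space M"
    then show "h (\<kappa> x) = (\<Sum>k\<in>\<kappa> ` space M. h k * indicator {x \<in> space M. \<kappa> x = k} x)"
      using assms(1) by (simp add: indicator_def)
  qed
  also have "\<dots> = (\<Sum>k\<in>\<kappa> ` space M. h k * measure M {x \<in> space M. \<kappa> x = k})"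
    using fibers by (subst Bochner_Integration.integral_sum) (auto simp: Int_absorb2 less_top[symmetric])
  finally show ?thesis .
qed

lemma (in finite_measure) integral_eq_sum_representatives:
  fixes \<kappa> :: "'a \<Rightarrow> 'k"
  assumes "finite (\<kappa> ` space M)" and "\<And>k. {x \<in> space M. \<kappa> x = k} \<in> sets M"
  obtains R where "finite R" "R \<subseteq> space M"
    "\<And>f. (\<And>x y. x \<in> space M \<Longrightarrow> y \<in> space M \<Longrightarrow> \<kappa> x = \<kappa> y \<Longrightarrow> f x = f y) \<Longrightarrow>
       (\<integral>x. f x \<partial>M) = (\<Sum>r\<in>R. f r * measure M {x \<in> space M. \<kappa> x = \<kappa> r})"
proof -
  have "\<forall>k\<in>\<kappa> ` space M. \<exists>x. x \<in> space M \<and> \<kappa> x = k" by blast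
  then obtain rep where rep: "\<And>k. k \<in> \<kappa> ` space M \<Longrightarrow> rep k \<in> space M \<and> \<kappa> (rep k) = k"
    by metis
  show thesis
  proof (rule that[of "rep ` \<kappa> ` space M"])
    show "finite (rep ` \<kappa> ` space M)" "rep ` \<kappa> ` space M \<subseteq> space M"
      using assms(1) rep by auto
    fix f :: "'a \<Rightarrow> real"
    assume f_cong: "\<And>x y. x \<in> space M \<Longrightarrow> y \<in> space M \<Longrightarrow> \<kappa> x = \<kappa> y \<Longrightarrow> f x = f y"
    have "(\<integral>x. f x \<partial>M) = (\<integral>x. f (rep (\<kappa> x)) \<partial>M)"
    proof (rule Bochner_Integration.integral_cong[OF refl])
      fix x assume "x \<in> space M"
      then show "f x = f (rep (\<kappa> x))"
        using rep[of "\<kappa> x"] by (intro f_cong) auto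
    qed
    also have "\<dots> = (\<Sum>k\<in>\<kappa> ` space M. f (rep k) * measure M {x \<in> space M. \<kappa> x = k})"
      by (rule integral_eq_sum_fibers[OF assms])
    also have "\<dots> = (\<Sum>k\<in>\<kappa> ` space M. f (rep k) * measure M {x \<in> space M. \<kappa> x = \<kappa> (rep k)})"
      using rep by (intro sum.cong) auto
    also have "\<dots> = (\<Sum>r\<in>rep ` \<kappa> ` space M. f r * measure M {x \<in> space M. \<kappa> x = \<kappa> r})"
      using rep by (simp add: sum.reindex inj_on_inverseI[of _ \<kappa>])
    finally show "(\<integral>x. f x \<partial>M) = (\<Sum>r\<in>rep ` \<kappa> ` space M. f r * measure M {x \<in> space M. \<kappa> x = \<kappa> r})" .
  qed
qed

lemma mu_t_pos:
  assumes "0 < \<delta>" "\<delta> < 1" "1 \<le> t" "0 < K" "0 < N"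
  shows "0 < mu_t \<delta> K N t"
proof -
  have "1 \<le> 4 * real N * (real t)\<^sup>2"
    using assms by (intro order.trans[OF _ mult_mono[of 1 "4 * real N" 1 "(real t)\<^sup>2"]])
      (auto simp: one_le_power)
  then have "0 < delta_t \<delta> N t" "delta_t \<delta> N t < 1"
    using assms unfolding delta_t_def by (auto simp: divide_simps)
  then have "0 < ln (1 / delta_t \<delta> N t)"
    by (simp add: ln_div)
  then show ?thesis
    using assms unfolding mu_t_def by simp
qed

lemma card_mult_mu_t_le: "real K * mu_t \<delta> K N t \<le> 1 / 2"
proof -
  have "real K * mu_t \<delta> K N t \<le> real K * (1 / (2 * real K))"
    unfolding mu_t_def by (intro mult_left_mono) auto
  then show ?thesis by (cases "K = 0") auto
qed

definition action_profile :: "('x \<Rightarrow> 'a) set \<Rightarrow> 'x \<Rightarrow> ('x \<Rightarrow> 'a) \<Rightarrow> 'a" where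
  "action_profile Pol' x = restrict (\<lambda>\<pi>. \<pi> x) Pol'"

lemma action_profile_eq_iff:
  "action_profile Pol' x = action_profile Pol' y \<longleftrightarrow> (\<forall>\<pi>\<in>Pol'. \<pi> x = \<pi> y)"
  unfolding action_profile_def by (auto simp: fun_eq_iff)

lemma finite_action_profiles:
  assumes "finite Pol'" "finite A" "\<forall>\<pi>\<in>Pol'. \<forall>x\<in>S. \<pi> x \<in> A"
  shows "finite (action_profile Pol' ` S)"
proof (rule finite_subset)
  show "action_profile Pol' ` S \<subseteq> PiE Pol' (\<lambda>_. A)"
    using assms(3) by (auto simp: action_profile_def)
  show "finite (PiE Pol' (\<lambda>_. A))"
    using assms(1,2) by (rule finite_PiE)
qed

lemma sets_action_profile_fiber:
  assumes "finite Pol'" "\<forall>\<pi>\<in>Pol'. \<pi> \<in> M \<rightarrow>\<^sub>M count_space UNIV"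
  shows "{x \<in> space M. action_profile Pol' x = k} \<in> sets M"
proof (cases "k \<in> action_profile Pol' ` space M")
  case True
  then obtain y where "k = action_profile Pol' y" by blast
  then have "{x \<in> space M. action_profile Pol' x = k} = {x \<in> space M. \<forall>\<pi>\<in>Pol'. \<pi> x = \<pi> y}"
    by (auto simp: action_profile_eq_iff)
  also have "\<dots> \<in> sets M"
  proof (intro sets.sets_Collect_finite_All \<open>finite Pol'\<close>)
    fix \<pi> assume "\<pi> \<in> Pol'"
    then have "\<pi> -` {\<pi> y} \<inter> space M \<in> sets M"
      using assms(2) by (intro measurable_sets[of _ _ "count_space UNIV"]) auto
    then show "{x \<in> space M. \<pi> x = \<pi> y} \<in> sets M"
      by (simp add: vimage_def Int_def conj_commute)
  qed
  finally show ?thesis .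
next
  case False
  then have "{x \<in> space M. action_profile Pol' x = k} = {}" by blast
  then show ?thesis by (metis sets.empty_sets)
qed

lemma exists_distr_expected_inverse_weight_le:
  fixes Pol' :: "('x \<Rightarrow> 'a) set" and D :: "'x measure"
  assumes "prob_space D" "finite Pol'" "Pol' \<noteq> {}" "finite A"
    and actions: "\<forall>\<pi>\<in>Pol'. \<forall>x\<in>space D. \<pi> x \<in> A"
    and "\<forall>\<pi>\<in>Pol'. \<pi> \<in> D \<rightarrow>\<^sub>M count_space UNIV"
    and "0 < c" "0 < \<mu>"
  shows "\<exists>P. is_distr Pol' P \<and>
    (\<forall>\<pi>\<in>Pol'. (\<integral>x. 1 / (c * W Pol' P x (\<pi> x) + \<mu>) \<partial>D) \<le> real (card A) / (c + \<mu>))"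
proof -
  interpret D: prob_space D by fact
  let ?\<kappa> = "action_profile Pol'"
  obtain R where R: "finite R" "R \<subseteq> space D"
    and integral_R: "\<And>f. (\<And>x y. x \<in> space D \<Longrightarrow> y \<in> space D \<Longrightarrow> ?\<kappa> x = ?\<kappa> y \<Longrightarrow> f x = f y) \<Longrightarrow>
       (\<integral>x. f x \<partial>D) = (\<Sum>r\<in>R. f r * measure D {x \<in> space D. ?\<kappa> x = ?\<kappa> r})"
  proof (rule D.integral_eq_sum_representatives)
    show "finite (?\<kappa> ` space D)"
      using assms(2,4,5) by (rule finite_action_profiles)
    show "{x \<in> space D. ?\<kappa> x = k} \<in> sets D" for k
      using assms(2,6) by (rule sets_action_profile_fiber)
  qed blast
  define q where "q r = measure D {x \<in> space D. ?\<kappa> x = ?\<kappa> r}" for r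
  have "(\<Sum>r\<in>R. q r) = 1"
    using integral_R[of "\<lambda>_. 1"] D.prob_space by (simp add: q_def)
  moreover have "\<forall>r\<in>R. 0 \<le> q r" "\<forall>\<pi>\<in>Pol'. \<forall>r\<in>R. \<pi> r \<in> A"
    using actions R(2) by (auto simp: q_def)
  ultimately obtain P where "is_distr Pol' P"
    and P_bound: "\<forall>\<pi>\<in>Pol'. (\<Sum>r\<in>R. q r / (c * W Pol' P r (\<pi> r) + \<mu>)) \<le> real (card A) / (c + \<mu>)"
    using exists_distr_inverse_weight_le[OF assms(2,3,4)] assms(7,8) by blast
  have "(\<integral>x. 1 / (c * W Pol' P x (\<pi> x) + \<mu>) \<partial>D) = (\<Sum>r\<in>R. q r / (c * W Pol' P r (\<pi> r) + \<mu>))"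
    if "\<pi> \<in> Pol'" for \<pi>
  proof -
    have "(\<integral>x. 1 / (c * W Pol' P x (\<pi> x) + \<mu>) \<partial>D) = (\<Sum>r\<in>R. 1 / (c * W Pol' P r (\<pi> r) + \<mu>) * q r)"
      unfolding q_def
    proof (rule integral_R)
      fix x y assume "?\<kappa> x = ?\<kappa> y"
      then have "\<pi> x = \<pi> y" "W Pol' P x a = W Pol' P y a" for a
        using that by (auto simp: action_profile_eq_iff intro: W_cong)
      then show "1 / (c * W Pol' P x (\<pi> x) + \<mu>) = 1 / (c * W Pol' P y (\<pi> y) + \<mu>)"
        by simp
    qed
    then show ?thesis
      by simp
  qed
  then show ?thesis
    using \<open>is_distr Pol' P\<close> P_bound by auto
qed

theorem corollary1:
  fixes A :: "'a set" and Pol Pol' :: "('x \<Rightarrow> 'a) set" and D :: "'x measure"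
    and \<delta> :: real and t :: nat
  assumes "finite A" and "A \<noteq> {}"
    and "finite Pol" and "\<forall>\<pi>\<in>Pol. \<forall>x\<in>space D. \<pi> x \<in> A"
    and "prob_space D"
    and "\<forall>\<pi>\<in>Pol. \<pi> \<in> D \<rightarrow>\<^sub>M count_space UNIV"
    and "0 < \<delta>" and "\<delta> < 1"
    and "Pol' \<subseteq> Pol" and "Pol' \<noteq> {}"
    and "1 \<le> t"
  shows "\<exists>P. is_distr Pol' P \<and>
    (\<forall>\<pi>\<in>Pol'. (\<integral>x. 1 / ((1 - real (card A) * mu_t \<delta> (card A) (card Pol) t)
                      * W Pol' P x (\<pi> x) + mu_t \<delta> (card A) (card Pol) t) \<partial>D)
               \<le> 2 * real (card A))"
proof -
  define \<mu> where "\<mu> = mu_t \<delta> (card A) (card Pol) t"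
  define c where "c = 1 - real (card A) * \<mu>"
  have "0 < card A" "0 < card Pol"
    using assms(1-3,9,10) by (auto simp: card_gt_0_iff)
  then have "0 < \<mu>"
    unfolding \<mu>_def using assms(7,8,11) by (intro mu_t_pos)
  have "1 / 2 \<le> c"
    using card_mult_mu_t_le[of "card A" \<delta> "card Pol" t] unfolding c_def \<mu>_def by linarith
  have "finite Pol'"
    using assms(3,9) by (rule rev_finite_subset)
  moreover have "\<forall>\<pi>\<in>Pol'. \<forall>x\<in>space D. \<pi> x \<in> A" "\<forall>\<pi>\<in>Pol'. \<pi> \<in> D \<rightarrow>\<^sub>M count_space UNIV"
    using assms(4,6,9) by blast+
  moreover have "0 < c"
    using \<open>1 / 2 \<le> c\<close> by linarith
  ultimately obtain P where "is_distr Pol' P" and P_bound: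
    "\<forall>\<pi>\<in>Pol'. (\<integral>x. 1 / (c * W Pol' P x (\<pi> x) + \<mu>) \<partial>D) \<le> real (card A) / (c + \<mu>)"
    using exists_distr_expected_inverse_weight_le[OF assms(5) _ assms(10,1)] \<open>0 < \<mu>\<close> by blast
  moreover have "real (card A) / (c + \<mu>) \<le> 2 * real (card A)"
    using divide_left_mono[of "1 / 2" "c + \<mu>" "real (card A)"] \<open>0 < \<mu>\<close> \<open>1 / 2 \<le> c\<close> by simp
  ultimately show ?thesis
    unfolding \<mu>_def[symmetric] c_def[symmetric] by (meson order.trans)
qed

end
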